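(* Let $G=(V=V_0\uplus V_1, v_{\mathsf{init}}, E,\gamma)$ be a quantitative graph game and let $d=\frac{p}{q}>1$ be the discount factor, with $p,q$ positive integers. Then the optimal cost $W$ of the game is a rational number with denominator at most $(p^{|V|}-q^{|V|})\cdot p^{|V|}$.
   Context: A quantitative graph game $G=(V=V_0\uplus V_1, v_{\mathsf{init}},E,\gamma)$ consists of a finite directed graph $(V,E)$ in which every state has at least one outgoing edge, a partition of $V$ into $V_0$ (states of the maximizing player $P_0$) and $V_1$ (states of the minimizing player $P_1$), an initial state $v_{\mathsf{init}}$, and an integer cost function $\gamma:E\to\mathbb{Z}$. A play is an infinite path $v_0v_1\dots$ with $v_0=v_{\mathsf{init}}$, where the player owning the current state chooses the successor; its cost with discount factor $d>1$ is $\sum_{k\ge0}\gamma(v_k,v_{k+1})/d^{k}$. Define $\mathit{wt}_1(v)=\max\{\gamma(v,w):(v,w)\in E\}$ if $v\in V_0$ and $\min\{\gamma(v,w):(v,w)\in E\}$ if $v\in V_1$, and $\mathit{wt}_{k+1}(v)=\max\{\gamma(v,w)+\frac1d\mathit{wt}_k(w):(v,w)\in E\}$ if $v\in V_0$, with $\min$ instead of $\max$ if $v\in V_1$. The optimal cost is $W=\lim_{k\to\infty}\mathit{wt}_k(v_{\mathsf{init}})$. *)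

theory Defs
  imports Complex_Main
begin

definition graph_game :: "'v set \<Rightarrow> 'v set \<Rightarrow> 'v \<Rightarrow> ('v \<times> 'v) set \<Rightarrow> bool" where
  "graph_game V V0 vinit E \<longleftrightarrow>
     finite V \<and> V0 \<subseteq> V \<and> vinit \<in> V \<and> E \<subseteq> V \<times> V \<and>
     (\<forall>v\<in>V. \<exists>w. (v, w) \<in> E)"

text \<open>wt V0 E gamma d k v is the paper's wt_k(v) for k >= 1 (the value at k = 0 is unused).\<close>

fun wt :: "'v set \<Rightarrow> ('v \<times> 'v) set \<Rightarrow> ('v \<times> 'v \<Rightarrow> int) \<Rightarrow> real \<Rightarrow> nat \<Rightarrow> 'v \<Rightarrow> real" where
  "wt V0 E \<gamma> d 0 v = 0"
| "wt V0 E \<gamma> d (Suc 0) v =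
     (if v \<in> V0 then Max ((\<lambda>w. real_of_int (\<gamma> (v, w))) ` {w. (v, w) \<in> E})
      else Min ((\<lambda>w. real_of_int (\<gamma> (v, w))) ` {w. (v, w) \<in> E}))"
| "wt V0 E \<gamma> d (Suc (Suc k)) v =
     (if v \<in> V0 then Max ((\<lambda>w. real_of_int (\<gamma> (v, w)) + wt V0 E \<gamma> d (Suc k) w / d) ` {w. (v, w) \<in> E})
      else Min ((\<lambda>w. real_of_int (\<gamma> (v, w)) + wt V0 E \<gamma> d (Suc k) w / d) ` {w. (v, w) \<in> E}))"

definition optimal_cost :: "'v set \<Rightarrow> 'v \<Rightarrow> ('v \<times> 'v) set \<Rightarrow> ('v \<times> 'v \<Rightarrow> int) \<Rightarrow> real \<Rightarrow> real" where
  "optimal_cost V0 vinit E \<gamma> d = lim (\<lambda>k. wt V0 E \<gamma> d k vinit)"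

end

theory Submission
  imports Defs
begin

(* wt_(k+1) = B(wt_k) for the Bellman operator B, which is a 1/d-contraction, so value
   iteration converges to a fixpoint W of B.  At a fixpoint every state v has a successor
   sigma(v) realising the Max/Min, and W(v) = gamma(v, sigma v) + W(sigma v)/d.  From v_init
   the sigma-path is a lasso: a prefix of k steps into a cycle of length l, with k + l <= |V|.
   Multiplying out, p^k W(v_init) = P + q^k W(u) and p^l W(u) = C + q^l W(u) with integers
   P, C, hence W(v_init) = (P (p^l - q^l) + C q^k) / (p^k (p^l - q^l)). *)

lemma Max_image_le_Max_image_plus:
  fixes f g :: "'a \<Rightarrow> 'b::linordered_ab_group_add"
  assumes "finite S" "S \<noteq> {}" "\<And>s. s \<in> S \<Longrightarrow> f s \<le> g s + c"
  shows "Max (f ` S) \<le> Max (g ` S) + c"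
proof -
  have "Max (f ` S) \<in> f ` S"
    using assms(1,2) by (intro Max_in) auto
  then obtain s where s: "s \<in> S" "Max (f ` S) = f s" by auto
  have "g s \<le> Max (g ` S)"
    using assms(1) s(1) by simp
  then show ?thesis
    unfolding s(2) using assms(3)[OF s(1)] by (blast intro: order_trans add_right_mono)
qed

lemma Min_image_le_Min_image_plus:
  fixes f g :: "'a \<Rightarrow> 'b::linordered_ab_group_add"
  assumes "finite S" "S \<noteq> {}" "\<And>s. s \<in> S \<Longrightarrow> f s \<le> g s + c"
  shows "Min (f ` S) \<le> Min (g ` S) + c"
proof -
  have "Min (g ` S) \<in> g ` S"
    using assms(1,2) by (intro Min_in) auto
  then obtain s where s: "s \<in> S" "Min (g ` S) = g s" by auto
  have "Min (f ` S) \<le> f s"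
    using assms(1) s(1) by simp
  then show ?thesis
    unfolding s(2) using assms(3)[OF s(1)] by (rule order_trans)
qed

locale discounted_game =
  fixes V V0 :: "'v set" and E :: "('v \<times> 'v) set" and \<gamma> :: "'v \<times> 'v \<Rightarrow> int" and d :: real
  assumes finite_V: "finite V"
    and E_subset: "E \<subseteq> V \<times> V"
    and successor_exists: "v \<in> V \<Longrightarrow> \<exists>w. (v, w) \<in> E"
    and discount_gt_1: "d > 1"
begin

abbreviation successors :: "'v \<Rightarrow> 'v set" where
  "successors v \<equiv> {w. (v, w) \<in> E}"

lemma finite_successors: "v \<in> V \<Longrightarrow> finite (successors v)"
  using finite_V E_subset by (auto intro: finite_subset)

lemma successors_nonempty: "v \<in> V \<Longrightarrow> successors v \<noteq> {}"
  using successor_exists by auto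

definition bellman :: "('v \<Rightarrow> real) \<Rightarrow> 'v \<Rightarrow> real" where
  "bellman f v =
     (if v \<in> V0 then Max ((\<lambda>w. real_of_int (\<gamma> (v, w)) + f w / d) ` successors v)
      else Min ((\<lambda>w. real_of_int (\<gamma> (v, w)) + f w / d) ` successors v))"

(* Also for k = 0: wt_0, unused in the paper, is defined as 0. *)
lemma wt_Suc_eq_bellman: "wt V0 E \<gamma> d (Suc k) v = bellman (wt V0 E \<gamma> d k) v"
  by (cases k) (simp_all add: bellman_def)

lemma bellman_dist_le:
  assumes "v \<in> V" "\<And>w. (v, w) \<in> E \<Longrightarrow> \<bar>f w - g w\<bar> \<le> c"
  shows "\<bar>bellman f v - bellman g v\<bar> \<le> c / d"
proof -
  let ?F = "\<lambda>f w. real_of_int (\<gamma> (v, w)) + f w / d"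
  have F_dist: "\<bar>?F f w - ?F g w\<bar> \<le> c / d" if "w \<in> successors v" for w
  proof -
    have "\<bar>?F f w - ?F g w\<bar> = \<bar>f w - g w\<bar> / d"
      using discount_gt_1 by (simp add: diff_divide_distrib[symmetric])
    also have "\<dots> \<le> c / d"
      using assms(2) that discount_gt_1 by (simp add: divide_right_mono)
    finally show ?thesis .
  qed
  then have F_le: "?F f w \<le> ?F g w + c / d" "?F g w \<le> ?F f w + c / d"
    if "w \<in> successors v" for w
    using F_dist[OF that] by (auto simp: abs_le_iff)
  note fin = finite_successors[OF assms(1)] and ne = successors_nonempty[OF assms(1)]
  show ?thesis
    using Max_image_le_Max_image_plus[where f = "?F f" and g = "?F g", OF fin ne F_le(1)]
      Max_image_le_Max_image_plus[where f = "?F g" and g = "?F f", OF fin ne F_le(2)]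
      Min_image_le_Min_image_plus[where f = "?F f" and g = "?F g", OF fin ne F_le(1)]
      Min_image_le_Min_image_plus[where f = "?F g" and g = "?F f", OF fin ne F_le(2)]
    by (simp add: bellman_def abs_le_iff)
qed

lemma wt_Suc_dist_le:
  assumes "\<And>w. w \<in> V \<Longrightarrow> \<bar>wt V0 E \<gamma> d 1 w\<bar> \<le> M" and "v \<in> V"
  shows "\<bar>wt V0 E \<gamma> d (Suc k) v - wt V0 E \<gamma> d k v\<bar> \<le> M / d ^ k"
  using assms(2)
proof (induction k arbitrary: v)
  case 0
  then show ?case
    using assms(1) by simp
next
  case (Suc k)
  have "\<bar>bellman (wt V0 E \<gamma> d (Suc k)) v - bellman (wt V0 E \<gamma> d k) v\<bar> \<le> M / d ^ k / d"
    using Suc E_subset by (intro bellman_dist_le) auto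
  then show ?case
    unfolding wt_Suc_eq_bellman by (simp add: mult.commute)
qed

lemma convergent_wt:
  assumes "v \<in> V"
  shows "convergent (\<lambda>k. wt V0 E \<gamma> d k v)"
proof -
  let ?M = "\<Sum>w\<in>V. \<bar>wt V0 E \<gamma> d 1 w\<bar>"
  have "\<bar>wt V0 E \<gamma> d 1 w\<bar> \<le> ?M" if "w \<in> V" for w
    using that finite_V by (intro member_le_sum) auto
  from wt_Suc_dist_le[OF this assms]
  have dist: "norm (wt V0 E \<gamma> d (Suc k) v - wt V0 E \<gamma> d k v) \<le> ?M * (1 / d) ^ k" for k
    by (simp add: power_one_over)
  have "summable (\<lambda>k. ?M * (1 / d) ^ k)"
    using discount_gt_1 by (intro summable_mult summable_geometric) simp
  then have "summable (\<lambda>k. wt V0 E \<gamma> d (Suc k) v - wt V0 E \<gamma> d k v)"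
    using dist by (rule summable_comparison_test')
  then show ?thesis
    unfolding summable_iff_convergent sum_lessThan_telescope[where f = "\<lambda>k. wt V0 E \<gamma> d k v"]
    by simp
qed

definition game_value :: "'v \<Rightarrow> real" where
  "game_value v = lim (\<lambda>k. wt V0 E \<gamma> d k v)"

lemma wt_tendsto_game_value: "v \<in> V \<Longrightarrow> (\<lambda>k. wt V0 E \<gamma> d k v) \<longlonglongrightarrow> game_value v"
  unfolding game_value_def using convergent_wt by (simp add: convergent_LIMSEQ_iff)

lemma bellman_game_value:
  assumes "v \<in> V"
  shows "bellman game_value v = game_value v"
proof -
  let ?err = "\<lambda>k. \<Sum>w\<in>V. \<bar>wt V0 E \<gamma> d k w - game_value w\<bar>"
  have "?err \<longlonglongrightarrow> (\<Sum>w\<in>V. \<bar>game_value w - game_value w\<bar>)"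
    by (intro tendsto_intros wt_tendsto_game_value)
  then have err_lim: "(\<lambda>k. ?err k / d) \<longlonglongrightarrow> 0"
    by (simp add: tendsto_divide_zero)
  have dist: "\<bar>bellman (wt V0 E \<gamma> d k) v - bellman game_value v\<bar> \<le> ?err k / d" for k
  proof (rule bellman_dist_le[OF assms])
    fix w assume "(v, w) \<in> E"
    then show "\<bar>wt V0 E \<gamma> d k w - game_value w\<bar> \<le> ?err k"
      using finite_V E_subset by (intro member_le_sum) auto
  qed
  have "(\<lambda>k. bellman (wt V0 E \<gamma> d k) v - bellman game_value v) \<longlonglongrightarrow> 0"
    using err_lim by (rule tendsto_0_le[where K = 1]) (use order_trans[OF dist abs_ge_self] in simp)
  then have "(\<lambda>k. bellman (wt V0 E \<gamma> d k) v) \<longlonglongrightarrow> bellman game_value v"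
    by (rule LIM_zero_cancel)
  then have "(\<lambda>k. wt V0 E \<gamma> d (Suc k) v) \<longlonglongrightarrow> bellman game_value v"
    by (simp only: wt_Suc_eq_bellman)
  moreover have "(\<lambda>k. wt V0 E \<gamma> d (Suc k) v) \<longlonglongrightarrow> game_value v"
    using wt_tendsto_game_value[OF assms] by (rule LIMSEQ_Suc)
  ultimately show ?thesis
    by (rule LIMSEQ_unique)
qed

lemma optimal_successor_exists:
  assumes "v \<in> V"
  shows "\<exists>w. (v, w) \<in> E \<and> game_value v = \<gamma> (v, w) + game_value w / d"
proof -
  let ?F = "\<lambda>w. real_of_int (\<gamma> (v, w)) + game_value w / d"
  have fin: "finite (?F ` successors v)" and ne: "?F ` successors v \<noteq> {}"
    using finite_successors[OF assms] successors_nonempty[OF assms] by auto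
  have "bellman game_value v \<in> ?F ` successors v"
    unfolding bellman_def using Max_in[OF fin ne] Min_in[OF fin ne] by simp
  then show ?thesis
    using bellman_game_value[OF assms] by auto
qed

end

lemma funpow_mem: "f ` A \<subseteq> A \<Longrightarrow> x \<in> A \<Longrightarrow> (f ^^ n) x \<in> A"
  by (induction n) auto

lemma funpow_lasso:
  assumes "finite A" "f ` A \<subseteq> A" "x \<in> A"
  obtains k l where "0 < l" "k + l \<le> card A" "(f ^^ (k + l)) x = (f ^^ k) x"
proof -
  have "(\<lambda>i. (f ^^ i) x) ` {..card A} \<subseteq> A"
    using funpow_mem[OF assms(2,3)] by blast
  then have "card ((\<lambda>i. (f ^^ i) x) ` {..card A}) < card {..card A}"
    using card_mono[OF assms(1)] by (simp add: less_Suc_eq_le)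
  then have "\<not> inj_on (\<lambda>i. (f ^^ i) x) {..card A}"
    by (rule pigeonhole)
  then obtain i j where ij: "i \<le> card A" "j \<le> card A" "i \<noteq> j" "(f ^^ i) x = (f ^^ j) x"
    unfolding inj_on_def by auto
  have "\<exists>i j. i < j \<and> j \<le> card A \<and> (f ^^ j) x = (f ^^ i) x"
    using ij by (metis linorder_neqE_nat)
  then obtain i j where "i < j" "j \<le> card A" "(f ^^ j) x = (f ^^ i) x"
    by blast
  then show thesis
    using that[of "j - i" i] by simp
qed

lemma power_diff_power_mono:
  fixes p q :: int
  assumes "0 < q" "q \<le> p" "l \<le> n"
  shows "p ^ l - q ^ l \<le> p ^ n - q ^ n"
proof (rule lift_Suc_mono_le[OF _ assms(3)])
  fix m
  have "(q - 1) * q ^ m \<le> (p - 1) * p ^ m"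
    using assms by (intro mult_mono power_mono) auto
  then show "p ^ m - q ^ m \<le> p ^ Suc m - q ^ Suc m"
    by (simp add: algebra_simps)
qed

lemma positional_unfold_scaled:
  fixes p q :: nat and \<gamma> :: "'v \<times> 'v \<Rightarrow> int"
  assumes "0 < p" "\<sigma> ` V \<subseteq> V" "v \<in> V"
    and "\<And>u. u \<in> V \<Longrightarrow> x u = \<gamma> (u, \<sigma> u) + x (\<sigma> u) / (real p / real q)"
  shows "\<exists>I::int. x v * real p ^ m = I + real q ^ m * x ((\<sigma> ^^ m) v)"
proof (induction m)
  case 0
  show ?case by simp
next
  case (Suc m)
  then obtain I :: int where I: "x v * real p ^ m = I + real q ^ m * x ((\<sigma> ^^ m) v)" ..
  define u where "u = (\<sigma> ^^ m) v"
  have step: "x u * real p = \<gamma> (u, \<sigma> u) * real p + real q * x (\<sigma> u)"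
    using assms(1) assms(4)[of u] funpow_mem[OF assms(2,3)] by (simp add: u_def field_simps)
  have "x v * real p ^ Suc m = real p * (x v * real p ^ m)"
    by simp
  also have "\<dots> = real p * I + real q ^ m * (x u * real p)"
    unfolding I u_def by (simp add: algebra_simps)
  also have "\<dots> = of_int (p * I + q ^ m * p * \<gamma> (u, \<sigma> u)) + real q ^ Suc m * x ((\<sigma> ^^ Suc m) v)"
    unfolding step by (simp add: u_def algebra_simps)
  finally show ?case ..
qed

lemma positional_value_rational:
  fixes p q :: nat and \<gamma> :: "'v \<times> 'v \<Rightarrow> int"
  assumes "finite V" "\<sigma> ` V \<subseteq> V" "v \<in> V" "0 < q" "q < p"
    and "\<And>u. u \<in> V \<Longrightarrow> x u = \<gamma> (u, \<sigma> u) + x (\<sigma> u) / (real p / real q)"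
  shows "\<exists>a b :: int. 0 < b \<and> b \<le> (int p ^ card V - int q ^ card V) * int p ^ card V \<and>
           x v = of_int a / of_int b"
proof -
  obtain k l where kl: "0 < l" "k + l \<le> card V" "(\<sigma> ^^ (k + l)) v = (\<sigma> ^^ k) v"
    using funpow_lasso[OF assms(1-3)] .
  define u where "u = (\<sigma> ^^ k) v"
  have "u \<in> V"
    using funpow_mem[OF assms(2,3)] by (simp add: u_def)
  have "(\<sigma> ^^ l) u = u"
    using kl(3) unfolding u_def by (metis add.commute comp_apply funpow_add)
  have "0 < p"
    using assms(5) by simp
  obtain P :: int where P: "x v * real p ^ k = P + real q ^ k * x u"
    using positional_unfold_scaled[OF \<open>0 < p\<close> assms(2,3,6), of k] by (auto simp: u_def)
  obtain C :: int where C: "x u * real p ^ l = C + real q ^ l * x u"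
    using positional_unfold_scaled[OF \<open>0 < p\<close> assms(2) \<open>u \<in> V\<close> assms(6), of l]
      \<open>(\<sigma> ^^ l) u = u\<close> by auto
  define b where "b = int p ^ k * (int p ^ l - int q ^ l)"
  have "int q ^ l < int p ^ l"
    using assms(5) kl(1) by (simp add: power_strict_mono)
  then have "0 < b"
    using assms(5) by (simp add: b_def)
  have "int p ^ l - int q ^ l \<le> int p ^ card V - int q ^ card V"
    using assms(4,5) kl(2) by (intro power_diff_power_mono) auto
  moreover have "int p ^ k \<le> int p ^ card V"
    using assms(5) kl(2) by (intro power_increasing) auto
  ultimately have "b \<le> (int p ^ card V - int q ^ card V) * int p ^ card V"
    using \<open>int q ^ l < int p ^ l\<close> by (simp add: b_def mult.commute mult_mono)
  moreover have "x v = of_int (P * (int p ^ l - int q ^ l) + C * int q ^ k) / of_int b"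
  proof -
    have C': "x u * (real p ^ l - real q ^ l) = C"
      using C by (simp add: algebra_simps)
    have "x v * of_int b = (x v * real p ^ k) * (real p ^ l - real q ^ l)"
      by (simp add: b_def)
    also have "\<dots> = P * (real p ^ l - real q ^ l) + real q ^ k * (x u * (real p ^ l - real q ^ l))"
      unfolding P by (simp add: algebra_simps)
    also have "\<dots> = of_int (P * (int p ^ l - int q ^ l) + C * int q ^ k)"
      unfolding C' by simp
    finally show ?thesis
      using \<open>0 < b\<close> by (simp add: nonzero_eq_divide_eq)
  qed
  ultimately show ?thesis
    using \<open>0 < b\<close> by blast
qed

theorem corollary1:
  fixes V V0 :: "'v set" and vinit :: 'v and E :: "('v \<times> 'v) set"
    and \<gamma> :: "'v \<times> 'v \<Rightarrow> int" and p q :: nat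
  assumes "graph_game V V0 vinit E"
    and "p > 0" and "q > 0" and "real p / real q > 1"
  shows "convergent (\<lambda>k. wt V0 E \<gamma> (real p / real q) k vinit) \<and>
         (\<exists>a b :: int. b > 0 \<and> b \<le> (int p ^ card V - int q ^ card V) * int p ^ card V \<and>
            optimal_cost V0 vinit E \<gamma> (real p / real q) = real_of_int a / real_of_int b)"
proof -
  interpret discounted_game V V0 E \<gamma> "real p / real q"
    using assms(1,4) by unfold_locales (auto simp: graph_game_def)
  have "vinit \<in> V"
    using assms(1) by (simp add: graph_game_def)
  have "q < p"
    using assms(3,4) by (simp add: field_simps)
  have "\<forall>v\<in>V. \<exists>w. (v, w) \<in> E \<and> game_value v = \<gamma> (v, w) + game_value w / (real p / real q)"
    using optimal_successor_exists by blast
  then obtain \<sigma> where \<sigma>: "\<forall>v\<in>V. (v, \<sigma> v) \<in> E \<and>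
      game_value v = \<gamma> (v, \<sigma> v) + game_value (\<sigma> v) / (real p / real q)"
    by (metis bchoice)
  then have "\<sigma> ` V \<subseteq> V"
    using E_subset by auto
  then have "\<exists>a b :: int. b > 0 \<and> b \<le> (int p ^ card V - int q ^ card V) * int p ^ card V \<and>
      game_value vinit = of_int a / of_int b"
    using \<sigma> by (intro positional_value_rational[OF finite_V _ \<open>vinit \<in> V\<close> assms(3) \<open>q < p\<close>]) auto
  then show ?thesis
    using convergent_wt[OF \<open>vinit \<in> V\<close>] by (simp add: optimal_cost_def game_value_def)
qed

end
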